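(* For $n\ge2$, the matrix ordered dual $NC(n)^d$ is completely order isomorphic to the operator subsystem $\mathcal W=\Big\{\bigoplus_{k=1}^n\begin{pmatrix}a^k_{11}&a^k_{12}\\ a^k_{21}&a^k_{22}\end{pmatrix}: a^k_{ii}=a^l_{jj}\ (i,j=1,2,\ k,l=1,\dots,n),\ a^k_{12}=a^k_{21}\ (k=1,\dots,n)\Big\}$ of $\bigoplus_{k=1}^n M_2$.
   Context: $NC(n)=\mathrm{span}\{1,h_1,\dots,h_n\}$ inside the universal unital C$^*$-algebra generated by selfadjoint contractions $h_1,\dots,h_n$. For a finite-dimensional operator system $\mathcal S$, the matrix ordered dual $\mathcal S^d$ is the dual space with $M_n(\mathcal S^d)$ identified with linear maps $\mathcal S\to M_n$ and positive cone the completely positive maps (an operator system with a faithful state as unit). *)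

theory Defs
  imports Complex_Main "HOL-Library.Complex_Order"
begin

definition psd_on :: "'i set \<Rightarrow> ('i \<Rightarrow> 'i \<Rightarrow> complex) \<Rightarrow> bool" where
  "psd_on I M \<longleftrightarrow> (\<forall>v. 0 \<le> (\<Sum>a\<in>I. \<Sum>b\<in>I. cnj (v a) * M a b * v b))"

definition selfadj_contraction :: "nat \<Rightarrow> (nat \<Rightarrow> nat \<Rightarrow> complex) \<Rightarrow> bool" where
  "selfadj_contraction m T \<longleftrightarrow>
     (\<forall>a<m. \<forall>b<m. T b a = cnj (T a b)) \<and>
     psd_on {..<m} (\<lambda>a b. (if a = b then 1 else 0) - (\<Sum>c<m. cnj (T c a) * T c b))"

text \<open>An element of M_p(NC(n)) is written
  A 0 (x) 1 + sum_{i=1..n} A i (x) h_i with p x p matrices A i (entries A i r s).\<close>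
definition nc_pos :: "nat \<Rightarrow> nat \<Rightarrow> (nat \<Rightarrow> nat \<Rightarrow> nat \<Rightarrow> complex) \<Rightarrow> bool" where
  "nc_pos n p A \<longleftrightarrow>
     (\<forall>m T. (\<forall>i\<in>{1..n}. selfadj_contraction m (T i)) \<longrightarrow>
        psd_on ({..<p} \<times> {..<m})
          (\<lambda>(r, a) (s, b). A 0 r s * (if a = b then 1 else 0) + (\<Sum>i\<in>{1..n}. A i r s * T i a b)))"

text \<open>Matrix order of the dual NC(n)^d. An element of M_p(NC(n)^d) is a linear map
  phi : NC(n) -> M_p, encoded by B i = phi(h_i) (with h_0 = 1). It is positive iff phi is
  completely positive.\<close>
definition dual_pos :: "nat \<Rightarrow> nat \<Rightarrow> (nat \<Rightarrow> nat \<Rightarrow> nat \<Rightarrow> complex) \<Rightarrow> bool" where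
  "dual_pos n p B \<longleftrightarrow>
     (\<forall>q A. nc_pos n q A \<longrightarrow>
        psd_on ({..<q} \<times> {..<p}) (\<lambda>(r, a) (s, b). \<Sum>i\<le>n. A i r s * B i a b))"

text \<open>An element Y of
  M_p(M_2 + ... + M_2) has entries Y k r s i j (summand k, outer entry (r,s), inner (i,j));
  it is positive iff for each k the corresponding matrix in M_p(M_2) = M_2p is positive.\<close>
definition dsum_pos :: "nat \<Rightarrow> nat \<Rightarrow> (nat \<Rightarrow> nat \<Rightarrow> nat \<Rightarrow> nat \<Rightarrow> nat \<Rightarrow> complex) \<Rightarrow> bool" where
  "dsum_pos n p Y \<longleftrightarrow>
     (\<forall>k\<in>{1..n}. psd_on ({..<p} \<times> {..<2}) (\<lambda>(r, i) (s, j). Y k r s i j))"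

definition in_W :: "nat \<Rightarrow> (nat \<Rightarrow> nat \<Rightarrow> nat \<Rightarrow> complex) \<Rightarrow> bool" where
  "in_W n w \<longleftrightarrow>
     (\<forall>k\<in>{1..n}. \<forall>l\<in>{1..n}. \<forall>i<2. \<forall>j<2. w k i i = w l j j) \<and>
     (\<forall>k\<in>{1..n}. w k 0 1 = w k 1 0)"

text \<open>The linear map NC(n)^d -> M_2 + ... + M_2 determined by the images c l of the
  basis functionals dual to 1, h_1, ..., h_n.\<close>
definition lin_map :: "nat \<Rightarrow> (nat \<Rightarrow> nat \<Rightarrow> nat \<Rightarrow> nat \<Rightarrow> complex) \<Rightarrow> (nat \<Rightarrow> complex)
    \<Rightarrow> nat \<Rightarrow> nat \<Rightarrow> nat \<Rightarrow> complex" where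
  "lin_map n c f = (\<lambda>k i j. \<Sum>l\<le>n. f l * c l k i j)"

definition lin_map_ampl :: "nat \<Rightarrow> (nat \<Rightarrow> nat \<Rightarrow> nat \<Rightarrow> nat \<Rightarrow> complex)
    \<Rightarrow> (nat \<Rightarrow> nat \<Rightarrow> nat \<Rightarrow> complex) \<Rightarrow> nat \<Rightarrow> nat \<Rightarrow> nat \<Rightarrow> nat \<Rightarrow> nat \<Rightarrow> complex" where
  "lin_map_ampl n c B = (\<lambda>k r s. lin_map n c (\<lambda>l. B l r s) k)"

definition compl_order_iso_dual_W :: "nat \<Rightarrow> (nat \<Rightarrow> nat \<Rightarrow> nat \<Rightarrow> nat \<Rightarrow> complex) \<Rightarrow> bool" where
  "compl_order_iso_dual_W n c \<longleftrightarrow>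
     (\<forall>f. in_W n (lin_map n c f)) \<and>
     (\<forall>w. in_W n w \<longrightarrow> (\<exists>f. \<forall>k\<in>{1..n}. \<forall>i<2. \<forall>j<2. lin_map n c f k i j = w k i j)) \<and>
     (\<forall>f. (\<forall>k\<in>{1..n}. \<forall>i<2. \<forall>j<2. lin_map n c f k i j = 0) \<longrightarrow> (\<forall>l\<le>n. f l = 0)) \<and>
     (\<forall>p B. dual_pos n p B \<longleftrightarrow> dsum_pos n p (lin_map_ampl n c B))"

end

theory Submission
  imports Defs
begin

text \<open>In the basis dual to \<open>1, h\<^sub>1, \<dots>, h\<^sub>n\<close>, an element of \<open>M\<^sub>p(NC(n)\<^sup>d)\<close> is a tuple
  \<open>B\<^sub>0, \<dots>, B\<^sub>n\<close> of \<open>p \<times> p\<close> matrices (the map \<open>\<phi>\<close> with \<open>\<phi>(1) = B\<^sub>0\<close>, \<open>\<phi>(h\<^sub>k) = B\<^sub>k\<close>),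
  and \<open>W_basis\<close> sends it to the direct sum of the blocks \<open>[[B\<^sub>0, B\<^sub>k], [B\<^sub>k, B\<^sub>0]]\<close>. So one
  has to show that \<open>\<phi>\<close> is completely positive iff all these blocks are positive.
  Necessity: \<open>[[1, T], [T, 1]]\<close> is positive for every selfadjoint contraction \<open>T\<close>, so
  \<open>1 \<otimes> I\<^sub>2 + h\<^sub>k \<otimes> [[0, 1], [1, 0]]\<close> is positive in \<open>M\<^sub>2(NC(n))\<close>, and \<open>\<phi>\<close> maps it to the
  \<open>k\<close>-th block. Sufficiency: after replacing \<open>B\<^sub>0\<close> by \<open>B\<^sub>0 + \<epsilon>I\<close>, a congruence \<open>K\<close> (built
  by Schur complements) turns \<open>B\<^sub>0\<close> into the identity, and positivity of the blocks says that the
  \<open>K B\<^sub>k K\<^sup>*\<close> are selfadjoint contractions. Positivity of \<open>\<Sum> A\<^sub>i \<otimes> B\<^sub>i\<close> for positive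
  \<open>A \<in> M\<^sub>q(NC(n))\<close> is then an instance of the definition of the order of \<open>NC(n)\<close>, at the
  representation \<open>h\<^sub>i \<mapsto> K B\<^sub>i K\<^sup>*\<close>; finally let \<open>\<epsilon> \<rightarrow> 0\<close>.\<close>

subsection \<open>Sesquilinear forms\<close>

definition sesq :: "nat \<Rightarrow> (nat \<Rightarrow> nat \<Rightarrow> complex) \<Rightarrow> (nat \<Rightarrow> complex) \<Rightarrow> (nat \<Rightarrow> complex) \<Rightarrow> complex" where
  "sesq p M x y = (\<Sum>a<p. \<Sum>b<p. cnj (x a) * M a b * y b)"

definition hermitian :: "nat \<Rightarrow> (nat \<Rightarrow> nat \<Rightarrow> complex) \<Rightarrow> bool" where
  "hermitian p M \<longleftrightarrow> (\<forall>a<p. \<forall>b<p. M b a = cnj (M a b))"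

definition id_mat :: "nat \<Rightarrow> nat \<Rightarrow> complex" where
  "id_mat a b = (if a = b then 1 else 0)"

definition congruence :: "nat \<Rightarrow> (nat \<Rightarrow> nat \<Rightarrow> complex) \<Rightarrow> (nat \<Rightarrow> nat \<Rightarrow> complex) \<Rightarrow> nat \<Rightarrow> nat \<Rightarrow> complex" where
  "congruence p K M = (\<lambda>a b. \<Sum>c<p. \<Sum>e<p. K a c * M c e * cnj (K b e))"

definition adj_mult :: "nat \<Rightarrow> (nat \<Rightarrow> nat \<Rightarrow> complex) \<Rightarrow> (nat \<Rightarrow> complex) \<Rightarrow> nat \<Rightarrow> complex" where
  "adj_mult p K x = (\<lambda>c. \<Sum>a<p. cnj (K a c) * x a)"

lemma sum_id_mat_left:
  assumes "a < p"
  shows "(\<Sum>e<p. id_mat a e * f e) = f a"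
proof -
  have "id_mat a e * f e = (if a = e then f e else 0)" for e by (simp add: id_mat_def)
  then show ?thesis using assms by simp
qed

lemma sum_id_mat_right:
  assumes "a < p"
  shows "(\<Sum>e<p. f e * id_mat e a) = f a"
proof -
  have "f e * id_mat e a = (if a = e then f e else 0)" for e by (simp add: id_mat_def)
  then show ?thesis using assms by simp
qed

lemma hermitianD: "hermitian p M \<Longrightarrow> a < p \<Longrightarrow> b < p \<Longrightarrow> M b a = cnj (M a b)"
  unfolding hermitian_def by blast

lemma hermitian_diag_real: "hermitian p M \<Longrightarrow> a < p \<Longrightarrow> M a a = of_real (Re (M a a))"
  using hermitianD[of p M a a] by (simp add: complex_eq_iff)

lemma psd_on_iff_sesq: "psd_on {..<m} M \<longleftrightarrow> (\<forall>v. 0 \<le> sesq m M v v)"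
  by (simp add: psd_on_def sesq_def)

lemma sesq_cong:
  assumes "\<And>a. a < p \<Longrightarrow> x a = x' a" "\<And>a. a < p \<Longrightarrow> y a = y' a"
    "\<And>a b. a < p \<Longrightarrow> b < p \<Longrightarrow> M a b = M' a b"
  shows "sesq p M x y = sesq p M' x' y'"
  unfolding sesq_def using assms by (intro sum.cong) auto

lemma sesq_mult_right: "sesq p M x y = (\<Sum>a<p. cnj (x a) * (\<Sum>b<p. M a b * y b))"
  unfolding sesq_def by (simp add: sum_distrib_left mult.assoc)

lemma sesq_mult_left:
  assumes "hermitian p M"
  shows "sesq p M x y = (\<Sum>b<p. cnj (\<Sum>a<p. M b a * x a) * y b)"
proof -
  have "sesq p M x y = (\<Sum>b<p. (\<Sum>a<p. cnj (x a) * M a b) * y b)"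
    unfolding sesq_def by (subst sum.swap) (simp add: sum_distrib_right)
  also have "\<dots> = (\<Sum>b<p. cnj (\<Sum>a<p. M b a * x a) * y b)"
  proof (rule sum.cong[OF refl])
    fix b assume b: "b \<in> {..<p}"
    have "(\<Sum>a<p. cnj (x a) * M a b) = cnj (\<Sum>a<p. M b a * x a)"
      unfolding cnj_sum using hermitianD[OF assms _ b[simplified]]
      by (intro sum.cong refl) (simp add: mult.commute)
    then show "(\<Sum>a<p. cnj (x a) * M a b) * y b = cnj (\<Sum>a<p. M b a * x a) * y b" by simp
  qed
  finally show ?thesis .
qed

lemma sesq_id_mat: "sesq p id_mat x y = (\<Sum>a<p. cnj (x a) * y a)"
  unfolding sesq_mult_right by (rule sum.cong) (auto simp: sum_id_mat_left)

lemma sesq_id_mat_nonneg: "0 \<le> sesq p id_mat x x"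
  unfolding sesq_id_mat by (intro sum_nonneg) (simp add: less_eq_complex_def)

lemma Re_sesq_id_mat: "Re (sesq p id_mat x x) = (\<Sum>a<p. (cmod (x a))\<^sup>2)"
  unfolding sesq_id_mat Re_sum by (simp add: cmod_def power2_eq_square)

lemma sesq_add_mat: "sesq p (\<lambda>a b. M a b + N a b) x y = sesq p M x y + sesq p N x y"
  unfolding sesq_def by (simp add: sum.distrib algebra_simps)

lemma sesq_scale_mat: "sesq p (\<lambda>a b. s * M a b) x y = s * sesq p M x y"
  unfolding sesq_def by (simp add: sum_distrib_left algebra_simps)

lemma sesq_add_vec:
  "sesq p M (\<lambda>a. x a + y a) (\<lambda>a. x a + y a) = sesq p M x x + sesq p M y y + sesq p M x y + sesq p M y x"
  unfolding sesq_def by (simp add: sum.distrib algebra_simps)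

lemma sesq_zero_left [simp]: "sesq p M (\<lambda>_. 0) y = 0"
  unfolding sesq_def by simp

lemma sesq_zero_right [simp]: "sesq p M x (\<lambda>_. 0) = 0"
  unfolding sesq_def by simp

lemma sum_mult_delta: "(\<Sum>b<(p::nat). f b * (if b = c then \<beta> else 0)) = (if c < p then f c * \<beta> else (0::complex))"
proof -
  have "(\<Sum>b<p. f b * (if b = c then \<beta> else 0)) = (\<Sum>b<p. (if b = c then f b * \<beta> else 0))"
    by (rule sum.cong) auto
  then show ?thesis by simp
qed

lemma sesq_unit_vectors:
  assumes "a < p" "b < p"
  shows "sesq p M (\<lambda>c. if c = a then \<alpha> else 0) (\<lambda>c. if c = b then \<beta> else 0) = cnj \<alpha> * M a b * \<beta>"
proof -
  have "\<And>c. (\<Sum>e<p. M c e * (if e = b then \<beta> else 0)) = M c b * \<beta>"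
    using assms by (simp add: sum_mult_delta)
  then have "sesq p M (\<lambda>c. if c = a then \<alpha> else 0) (\<lambda>c. if c = b then \<beta> else 0)
     = (\<Sum>c<p. (M c b * \<beta>) * (if c = a then cnj \<alpha> else 0))"
    unfolding sesq_mult_right by (intro sum.cong) (auto simp: mult.commute)
  also have "\<dots> = cnj \<alpha> * M a b * \<beta>" using assms by (simp add: sum_mult_delta)
  finally show ?thesis .
qed

lemma hermitian_if_Im_sesq_symmetric:
  assumes "\<And>x y. Im (sesq p M x y + sesq p M y x) = 0"
  shows "hermitian p M"
  unfolding hermitian_def
proof (intro allI impI)
  fix a b assume ab: "a < p" "b < p"
  have "Im (M a b + M b a) = 0"
    using assms[of "\<lambda>c. if c = a then 1 else 0" "\<lambda>c. if c = b then 1 else 0"] ab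
    by (simp add: sesq_unit_vectors)
  moreover have "Im (M a b * \<i> + cnj \<i> * M b a) = 0"
    using assms[of "\<lambda>c. if c = a then 1 else 0" "\<lambda>c. if c = b then \<i> else 0"] ab
    by (simp add: sesq_unit_vectors[of a p b] sesq_unit_vectors[of b p a])
  ultimately show "M b a = cnj (M a b)" by (simp add: complex_eq_iff)
qed

lemma hermitian_add_id_mat:
  assumes "hermitian p M"
  shows "hermitian p (\<lambda>a b. M a b + of_real s * id_mat a b)"
  unfolding hermitian_def
proof (intro allI impI)
  fix a b assume "a < p" "b < p"
  then have "M b a = cnj (M a b)" by (rule hermitianD[OF assms])
  then show "M b a + of_real s * id_mat b a = cnj (M a b + of_real s * id_mat a b)"
    by (simp add: id_mat_def)
qed

lemma hermitian_congruence:
  assumes h: "hermitian p M"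
  shows "hermitian p (congruence p K M)"
  unfolding hermitian_def
proof (intro allI impI)
  fix a b assume "a < p" "b < p"
  have "cnj (congruence p K M a b) = (\<Sum>e<p. \<Sum>c<p. cnj (K a c) * cnj (M c e) * K b e)"
    unfolding congruence_def by simp (rule sum.swap)
  also have "\<dots> = congruence p K M b a"
    unfolding congruence_def
  proof (intro sum.cong refl)
    fix e c assume "e \<in> {..<p}" "c \<in> {..<p}"
    then have "M e c = cnj (M c e)" using hermitianD[OF h, of c e] by simp
    then show "cnj (K a c) * cnj (M c e) * K b e = K b e * M e c * cnj (K a c)" by simp
  qed
  finally show "congruence p K M b a = cnj (congruence p K M a b)" by simp
qed

lemma sum_rotate3:
  "(\<Sum>b\<in>B. \<Sum>c\<in>C. \<Sum>e\<in>E. g b c e) = (\<Sum>c\<in>C. \<Sum>e\<in>E. \<Sum>b\<in>B. g b c e)"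
  by (subst sum.swap) (rule sum.cong[OF refl], rule sum.swap)

lemma sum_swap_pairs:
  "(\<Sum>a\<in>A. \<Sum>b\<in>B. \<Sum>c\<in>C. \<Sum>e\<in>E. f a b c e) = (\<Sum>c\<in>C. \<Sum>e\<in>E. \<Sum>a\<in>A. \<Sum>b\<in>B. f a b c e)"
  by (subst sum_rotate3) (rule sum_rotate3)

lemma sesq_congruence: "sesq p (congruence p K M) x y = sesq p M (adj_mult p K x) (adj_mult p K y)"
proof -
  have "sesq p (congruence p K M) x y
      = (\<Sum>a<p. \<Sum>b<p. \<Sum>c<p. \<Sum>e<p. cnj (x a) * K a c * M c e * cnj (K b e) * y b)"
    unfolding sesq_def congruence_def by (simp add: sum_distrib_left sum_distrib_right mult.assoc)
  also have "\<dots> = (\<Sum>c<p. \<Sum>e<p. \<Sum>a<p. \<Sum>b<p. cnj (x a) * K a c * M c e * cnj (K b e) * y b)"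
    by (rule sum_swap_pairs)
  also have "\<dots> = sesq p M (adj_mult p K x) (adj_mult p K y)"
    unfolding sesq_def adj_mult_def by (simp add: sum_distrib_left sum_distrib_right mult_ac)
  finally show ?thesis .
qed

lemma adj_mult_left_inverse:
  assumes L: "\<And>a b. a < p \<Longrightarrow> b < p \<Longrightarrow> (\<Sum>c<p. L a c * K c b) = id_mat a b" and a: "a < p"
  shows "adj_mult p K (adj_mult p L x) a = x a"
proof -
  have "adj_mult p K (adj_mult p L x) a = (\<Sum>b<p. \<Sum>c<p. cnj (L c b * K b a) * x c)"
    unfolding adj_mult_def by (simp add: sum_distrib_left mult_ac)
  also have "\<dots> = (\<Sum>c<p. cnj (\<Sum>b<p. L c b * K b a) * x c)"
    by (subst sum.swap) (simp add: sum_distrib_right)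
  also have "\<dots> = (\<Sum>c<p. x c * id_mat c a)"
    by (rule sum.cong) (auto simp: L a id_mat_def)
  also have "\<dots> = x a" using a by (rule sum_id_mat_right)
  finally show ?thesis .
qed

subsection \<open>Congruence of a positive definite form to the identity\<close>

definition schur_compl :: "nat \<Rightarrow> (nat \<Rightarrow> nat \<Rightarrow> complex) \<Rightarrow> nat \<Rightarrow> nat \<Rightarrow> complex" where
  "schur_compl p M = (\<lambda>a b. M a b - M a p * M p b / M p p)"

text \<open>One elimination step: if \<open>K\<close> with left inverse \<open>L\<close> reduces the Schur complement to the
  identity, then with \<open>m\<close> the first \<open>p\<close> entries of the last column of \<open>M\<close> and \<open>d = M p p\<close>,
  \<open>[[K, -K m / d], [0, 1 / sqrt d]]\<close> reduces \<open>M\<close> to the identity and has left inverse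
  \<open>[[L, m / sqrt d], [0, sqrt d]]\<close>.\<close>

definition congr_ext :: "nat \<Rightarrow> (nat \<Rightarrow> nat \<Rightarrow> complex) \<Rightarrow> (nat \<Rightarrow> nat \<Rightarrow> complex) \<Rightarrow> nat \<Rightarrow> nat \<Rightarrow> complex" where
  "congr_ext p M K a b =
     (if a < p then if b < p then K a b else - (\<Sum>c<p. K a c * M c p) / M p p
      else if b = p then 1 / of_real (sqrt (Re (M p p))) else 0)"

definition inv_ext :: "nat \<Rightarrow> (nat \<Rightarrow> nat \<Rightarrow> complex) \<Rightarrow> (nat \<Rightarrow> nat \<Rightarrow> complex) \<Rightarrow> nat \<Rightarrow> nat \<Rightarrow> complex" where
  "inv_ext p M L a b =
     (if b < p then if a < p then L a b else 0 else M a p / of_real (sqrt (Re (M p p))))"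

lemma sesq_Suc:
  "sesq (Suc p) M x y = sesq p M x y + cnj (x p) * (\<Sum>b<p. M p b * y b)
     + (\<Sum>a<p. cnj (x a) * M a p) * y p + cnj (x p) * M p p * y p"
  unfolding sesq_def by (simp add: sum.distrib sum_distrib_left sum_distrib_right algebra_simps)

lemma sesq_schur_compl:
  fixes x :: "nat \<Rightarrow> complex"
  assumes h: "hermitian (Suc p) M" and d: "0 < Re (M p p)"
  defines "t \<equiv> - (\<Sum>b<p. M p b * x b) / M p p"
  shows "sesq (Suc p) M (x(p := t)) (x(p := t)) = sesq p (schur_compl p M) x x"
proof -
  define u where "u = (\<Sum>b<p. M p b * x b)"
  have cu: "(\<Sum>a<p. cnj (x a) * M a p) = cnj u"
    unfolding u_def cnj_sum using hermitianD[OF h, of _ p]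
    by (intro sum.cong refl) (simp add: mult.commute)
  have dreal: "M p p = of_real (Re (M p p))" using hermitian_diag_real[OF h] by simp
  then have dne: "M p p \<noteq> 0" and cd: "cnj (M p p) = M p p"
    using d by (metis Re_complex_of_real less_irrefl zero_complex.sel(1), metis Reals_cnj_iff Reals_of_real)
  have e1: "sesq p M (x(p := t)) (x(p := t)) = sesq p M x x"
    unfolding sesq_def by (intro sum.cong) auto
  have e2: "(\<Sum>b<p. M p b * (x(p := t)) b) = u" unfolding u_def by (intro sum.cong) auto
  have e3: "(\<Sum>a<p. cnj ((x(p := t)) a) * M a p) = cnj u" unfolding cu[symmetric] by (intro sum.cong) auto
  have "sesq (Suc p) M (x(p := t)) (x(p := t)) = sesq p M x x - cnj u * u / M p p"
    unfolding sesq_Suc e1 e2 e3 unfolding t_def u_def[symmetric]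
    using dne cd by (simp add: field_simps)
  also have "\<dots> = sesq p (schur_compl p M) x x"
  proof -
    have "sesq p (schur_compl p M) x x
       = sesq p M x x - (\<Sum>a<p. \<Sum>b<p. (cnj (x a) * M a p) * (M p b * x b)) / M p p"
      unfolding sesq_def schur_compl_def by (simp add: sum_subtractf sum_divide_distrib algebra_simps)
    also have "(\<Sum>a<p. \<Sum>b<p. (cnj (x a) * M a p) * (M p b * x b)) = cnj u * u"
      unfolding u_def cu[unfolded u_def, symmetric] by (simp add: sum_product)
    finally show ?thesis by simp
  qed
  finally show ?thesis .
qed

lemma hermitian_schur_compl:
  assumes h: "hermitian (Suc p) M"
  shows "hermitian p (schur_compl p M)"
  unfolding hermitian_def schur_compl_def
proof (intro allI impI)
  fix a b assume ab: "a < p" "b < p"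
  have "M b a = cnj (M a b)" "M b p = cnj (M p b)" "M p a = cnj (M a p)"
    using hermitianD[OF h, of a b] hermitianD[OF h, of p b] hermitianD[OF h, of a p] ab by auto
  moreover have "cnj (M p p) = M p p"
    using hermitianD[OF h, of p p] by simp
  ultimately show "M b a - M b p * M p a / M p p = cnj (M a b - M a p * M p b / M p p)"
    by (simp add: mult.commute)
qed

lemma coercive_last_diag:
  assumes "\<And>x. \<delta> * (\<Sum>a<Suc p. (cmod (x a))\<^sup>2) \<le> Re (sesq (Suc p) M x x)"
  shows "\<delta> \<le> Re (M p p)"
  using assms[of "\<lambda>a. if a = p then 1 else 0"] unfolding sesq_def
  by (simp add: if_distrib cong: if_cong)

lemma coercive_schur_compl:
  assumes h: "hermitian (Suc p) M" and \<delta>: "0 < \<delta>"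
    and coercive: "\<And>x. \<delta> * (\<Sum>a<Suc p. (cmod (x a))\<^sup>2) \<le> Re (sesq (Suc p) M x x)"
  shows "\<delta> * (\<Sum>a<p. (cmod (x a))\<^sup>2) \<le> Re (sesq p (schur_compl p M) x x)"
proof -
  have d: "0 < Re (M p p)" using coercive_last_diag[OF coercive] \<delta> by linarith
  define t where "t = - (\<Sum>b<p. M p b * x b) / M p p"
  have "(\<Sum>a<p. (cmod (x a))\<^sup>2) \<le> (\<Sum>a<Suc p. (cmod ((x(p := t)) a))\<^sup>2)"
    by (simp add: sum.cong[of "{..<p}" "{..<p}" "\<lambda>a. (cmod ((x(p := t)) a))\<^sup>2"])
  then have "\<delta> * (\<Sum>a<p. (cmod (x a))\<^sup>2) \<le> \<delta> * (\<Sum>a<Suc p. (cmod ((x(p := t)) a))\<^sup>2)"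
    using \<delta> by (simp add: mult_left_mono)
  also have "\<dots> \<le> Re (sesq (Suc p) M (x(p := t)) (x(p := t)))" by (rule coercive)
  also have "\<dots> = Re (sesq p (schur_compl p M) x x)"
    unfolding t_def by (simp only: sesq_schur_compl[OF h d])
  finally show ?thesis .
qed

lemma congr_ext_mult_schur_compl:
  assumes "a < p"
  shows "(\<Sum>c<Suc p. congr_ext p M K a c * M c e) = (\<Sum>c<p. K a c * schur_compl p M c e)"
proof -
  have "(\<Sum>c<Suc p. congr_ext p M K a c * M c e)
      = (\<Sum>c<p. K a c * M c e) - (\<Sum>c<p. K a c * M c p) / M p p * M p e"
    unfolding congr_ext_def using assms by simp
  also have "\<dots> = (\<Sum>c<p. K a c * schur_compl p M c e)"
    unfolding schur_compl_def
    by (simp add: right_diff_distrib sum_subtractf sum_distrib_left sum_distrib_right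
        sum_divide_distrib algebra_simps)
  finally show ?thesis .
qed

lemma congruence_congr_ext:
  assumes h: "hermitian (Suc p) M" and d: "0 < Re (M p p)"
    and K: "\<And>a b. a < p \<Longrightarrow> b < p \<Longrightarrow> congruence p K (schur_compl p M) a b = id_mat a b"
    and ab: "a < Suc p" "b < Suc p"
  shows "congruence (Suc p) (congr_ext p M K) M a b = id_mat a b"
proof -
  define sd where "sd = complex_of_real (sqrt (Re (M p p)))"
  have dreal: "M p p = of_real (Re (M p p))" using hermitian_diag_real[OF h] by simp
  then have dne: "M p p \<noteq> 0" using d by (metis Re_complex_of_real less_irrefl zero_complex.sel(1))
  have "sd * cnj sd = of_real (Re (M p p))" "cnj sd = sd" "sd \<noteq> 0"
    unfolding sd_def using d by (simp_all flip: of_real_mult)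
  then have sd: "sd * cnj sd = M p p" "cnj sd = sd" "sd \<noteq> 0"
    using dreal by simp_all
  define al where "al = (\<lambda>a. \<Sum>c<p. K a c * M c p)"
  define R where "R = (\<lambda>a e. \<Sum>c<Suc p. congr_ext p M K a c * M c e)"
  have R_lt: "R a e = (\<Sum>c<p. K a c * schur_compl p M c e)" if "a < p" for a e
    unfolding R_def using that by (rule congr_ext_mult_schur_compl)
  have R_last: "R p e = M p e / sd" for e
    unfolding R_def congr_ext_def sd_def by simp
  have schur_last: "schur_compl p M c p = 0" for c
    unfolding schur_compl_def using dne by simp
  have "congruence (Suc p) (congr_ext p M K) M a b = (\<Sum>e<Suc p. R a e * cnj (congr_ext p M K b e))"
    unfolding congruence_def R_def sum_distrib_right by (rule sum.swap)
  also have "\<dots> = id_mat a b"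
  proof -
    consider "a < p" "b < p" | "a < p" "b = p" | "a = p" "b < p" | "a = p" "b = p"
      using ab by linarith
    then show ?thesis
    proof cases
      case 1
      have "(\<Sum>e<Suc p. R a e * cnj (congr_ext p M K b e))
          = (\<Sum>e<p. (\<Sum>c<p. K a c * schur_compl p M c e) * cnj (K b e))"
        using 1 by (simp add: R_lt schur_last congr_ext_def)
      also have "\<dots> = congruence p K (schur_compl p M) a b"
        unfolding congruence_def sum_distrib_right by (rule sum.swap)
      finally show ?thesis using K[OF 1] by simp
    next
      case 2
      then show ?thesis by (simp add: R_lt schur_last congr_ext_def id_mat_def)
    next
      case 3
      have cd: "cnj (M p p) = M p p" using hermitianD[OF h, of p p] by simp
      have c: "(\<Sum>e<p. M p e * cnj (K b e)) = cnj (al b)"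
        unfolding al_def cnj_sum using hermitianD[OF h, of _ p]
        by (intro sum.cong refl) (simp add: mult.commute)
      have "(\<Sum>e<Suc p. R a e * cnj (congr_ext p M K b e))
          = (\<Sum>e<p. M p e * cnj (K b e)) / sd + (M p p / sd) * cnj (- al b / M p p)"
        using 3 by (simp add: R_last congr_ext_def sum_divide_distrib al_def)
      also have "\<dots> = 0" unfolding c using dne sd cd by (simp add: field_simps)
      finally show ?thesis using 3 by (simp add: id_mat_def)
    next
      case 4
      have "(\<Sum>e<Suc p. R a e * cnj (congr_ext p M K b e)) = M p p / (sd * cnj sd)"
        using 4 by (simp add: R_last congr_ext_def sd_def)
      then show ?thesis using 4 sd dne by (simp add: id_mat_def)
    qed
  qed
  finally show ?thesis .
qed

lemma inv_ext_left_inverse: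
  assumes d: "0 < Re (M p p)" and dreal: "M p p = of_real (Re (M p p))"
    and L: "\<And>a b. a < p \<Longrightarrow> b < p \<Longrightarrow> (\<Sum>c<p. L a c * K c b) = id_mat a b"
    and ab: "a < Suc p" "b < Suc p"
  shows "(\<Sum>c<Suc p. inv_ext p M L a c * congr_ext p M K c b) = id_mat a b"
proof -
  define sd where "sd = complex_of_real (sqrt (Re (M p p)))"
  have dne: "M p p \<noteq> 0" using d dreal by (metis Re_complex_of_real less_irrefl zero_complex.sel(1))
  have "sd * sd = of_real (Re (M p p))" "sd \<noteq> 0"
    unfolding sd_def using d by (simp_all flip: of_real_mult)
  then have sd: "sd * sd = M p p" "sd \<noteq> 0"
    using dreal by simp_all
  consider "a < p" "b < p" | "a < p" "b = p" | "a = p" "b < p" | "a = p" "b = p"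
    using ab by linarith
  then show ?thesis
  proof cases
    case 1
    then show ?thesis using L[OF 1] by (simp add: inv_ext_def congr_ext_def)
  next
    case 2
    define al where "al c = (\<Sum>e<p. K c e * M e p)" for c
    have "(\<Sum>c<p. L a c * al c) = (\<Sum>e<p. (\<Sum>c<p. L a c * K c e) * M e p)"
      unfolding al_def by (simp add: sum_distrib_left sum_distrib_right mult.assoc) (rule sum.swap)
    also have "\<dots> = (\<Sum>e<p. id_mat a e * M e p)"
      using L 2 by (intro sum.cong) auto
    also have "\<dots> = M a p" using 2 by (simp add: sum_id_mat_left)
    finally have LKm: "(\<Sum>c<p. L a c * al c) = M a p" .
    have "(\<Sum>c<Suc p. inv_ext p M L a c * congr_ext p M K c b)
        = - (\<Sum>c<p. L a c * al c) / M p p + M a p / (sd * sd)"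
      using 2 by (simp add: inv_ext_def congr_ext_def sd_def sum_divide_distrib sum_negf flip: al_def)
    then show ?thesis using LKm sd dne 2 by (simp add: id_mat_def)
  next
    case 3
    then show ?thesis by (simp add: inv_ext_def congr_ext_def id_mat_def)
  next
    case 4
    then show ?thesis using sd dne by (simp add: inv_ext_def congr_ext_def id_mat_def sd_def)
  qed
qed

lemma coercive_congruent_id:
  fixes M :: "nat \<Rightarrow> nat \<Rightarrow> complex" and \<delta> :: real
  assumes "hermitian p M" "0 < \<delta>" "\<And>x. \<delta> * (\<Sum>a<p. (cmod (x a))\<^sup>2) \<le> Re (sesq p M x x)"
  shows "\<exists>K L. (\<forall>a<p. \<forall>b<p. congruence p K M a b = id_mat a b)
     \<and> (\<forall>a<p. \<forall>b<p. (\<Sum>c<p. L a c * K c b) = id_mat a b)"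
  using assms
proof (induction p arbitrary: M)
  case 0
  then show ?case by simp
next
  case (Suc p)
  have d: "0 < Re (M p p)" using coercive_last_diag[OF Suc.prems(3)] Suc.prems(2) by linarith
  have dreal: "M p p = of_real (Re (M p p))" using hermitian_diag_real[OF Suc.prems(1)] by simp
  obtain K L where
      K: "\<And>a b. a < p \<Longrightarrow> b < p \<Longrightarrow> congruence p K (schur_compl p M) a b = id_mat a b"
    and L: "\<And>a b. a < p \<Longrightarrow> b < p \<Longrightarrow> (\<Sum>c<p. L a c * K c b) = id_mat a b"
    using Suc.IH[OF hermitian_schur_compl[OF Suc.prems(1)] Suc.prems(2)]
      coercive_schur_compl[OF Suc.prems] by blast
  show ?case
    using congruence_congr_ext[OF Suc.prems(1) d K]
      inv_ext_left_inverse[where M = M and p = p, OF d dreal L] by blast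
qed

subsection \<open>Selfadjoint contractions as positive block matrices\<close>

text \<open>Positivity of the block matrix \<open>[[X, Y], [Y, X]]\<close> on \<open>\<complex>\<^sup>p \<oplus> \<complex>\<^sup>p\<close>.\<close>

definition sym_block_psd :: "nat \<Rightarrow> (nat \<Rightarrow> nat \<Rightarrow> complex) \<Rightarrow> (nat \<Rightarrow> nat \<Rightarrow> complex) \<Rightarrow> bool" where
  "sym_block_psd p X Y \<longleftrightarrow> (\<forall>x y. 0 \<le> sesq p X x x + sesq p X y y + sesq p Y x y + sesq p Y y x)"

lemma psd_on_block_iff:
  "psd_on ({..<p} \<times> {..<2::nat})
      (\<lambda>(r, i) (s, j). X r s * (if i = j then 1 else 0) + Y r s * (if i \<noteq> j then 1 else 0))
   \<longleftrightarrow> sym_block_psd p X Y"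
proof -
  have form: "(\<Sum>u\<in>{..<p} \<times> {..<2::nat}. \<Sum>w\<in>{..<p} \<times> {..<2::nat}. cnj (v u) *
      (case u of (r, i) \<Rightarrow> \<lambda>(s, j). X r s * (if i = j then 1 else 0) + Y r s * (if i \<noteq> j then 1 else 0)) w * v w)
    = sesq p X (\<lambda>r. v (r, 0)) (\<lambda>r. v (r, 0)) + sesq p X (\<lambda>r. v (r, 1)) (\<lambda>r. v (r, 1))
      + sesq p Y (\<lambda>r. v (r, 0)) (\<lambda>r. v (r, 1)) + sesq p Y (\<lambda>r. v (r, 1)) (\<lambda>r. v (r, 0))" for v :: "nat \<times> nat \<Rightarrow> complex"
    by (simp only: sum.cartesian_product')
      (simp add: numeral_2_eq_2 sesq_def sum.distrib algebra_simps)
  show ?thesis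
  proof
    assume "psd_on ({..<p} \<times> {..<2::nat})
      (\<lambda>(r, i) (s, j). X r s * (if i = j then 1 else 0) + Y r s * (if i \<noteq> j then 1 else 0))"
    then have "0 \<le> sesq p X (\<lambda>r. v (r, 0)) (\<lambda>r. v (r, 0)) + sesq p X (\<lambda>r. v (r, 1)) (\<lambda>r. v (r, 1))
      + sesq p Y (\<lambda>r. v (r, 0)) (\<lambda>r. v (r, 1)) + sesq p Y (\<lambda>r. v (r, 1)) (\<lambda>r. v (r, 0))" for v :: "nat \<times> nat \<Rightarrow> complex"
      unfolding psd_on_def form by blast
    from this[of "\<lambda>(r, i). if i = 0 then x r else y r" for x y] show "sym_block_psd p X Y"
      unfolding sym_block_psd_def by simp
  qed (unfold psd_on_def form sym_block_psd_def, blast)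
qed

lemma sesq_one_minus_gram:
  "sesq m (\<lambda>a b. (if a = b then 1 else 0) - (\<Sum>c<m. cnj (T c a) * T c b)) y y
   = sesq m id_mat y y - (\<Sum>c<m. cnj (\<Sum>b<m. T c b * y b) * (\<Sum>b<m. T c b * y b))"
proof -
  have "sesq m (\<lambda>a b. (if a = b then 1 else 0) - (\<Sum>c<m. cnj (T c a) * T c b)) y y
     = sesq m id_mat y y - (\<Sum>a<m. \<Sum>b<m. \<Sum>c<m. cnj (y a) * cnj (T c a) * T c b * y b)"
    unfolding sesq_def id_mat_def
    by (simp add: sum_subtractf right_diff_distrib left_diff_distrib sum_distrib_left
        sum_distrib_right mult.assoc)
  also have "(\<Sum>a<m. \<Sum>b<m. \<Sum>c<m. cnj (y a) * cnj (T c a) * T c b * y b)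
      = (\<Sum>c<m. \<Sum>a<m. \<Sum>b<m. cnj (y a) * cnj (T c a) * T c b * y b)"
    by (rule trans[OF sum_rotate3 sum_rotate3])
  also have "\<dots> = (\<Sum>c<m. cnj (\<Sum>b<m. T c b * y b) * (\<Sum>b<m. T c b * y b))"
    by (simp add: sum_product mult_ac) (rule sum.cong[OF refl], rule sum.swap)
  finally show ?thesis .
qed

lemma sym_block_psd_id_of_selfadj_contraction:
  assumes T: "selfadj_contraction m T"
  shows "sym_block_psd m id_mat T"
  unfolding sym_block_psd_def
proof (intro allI)
  fix x y
  have h: "hermitian m T" using T unfolding selfadj_contraction_def hermitian_def by blast
  define z where "z = (\<lambda>a. \<Sum>b<m. T a b * y b)"
  have defect: "0 \<le> sesq m id_mat y y - (\<Sum>c<m. cnj (z c) * z c)"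
    using T unfolding selfadj_contraction_def psd_on_iff_sesq sesq_one_minus_gram z_def by blast
  have "sesq m T x y = (\<Sum>a<m. cnj (x a) * z a)" unfolding sesq_mult_right z_def ..
  moreover have "sesq m T y x = (\<Sum>a<m. cnj (z a) * x a)" unfolding sesq_mult_left[OF h] z_def ..
  ultimately have "sesq m id_mat x x + sesq m id_mat y y + sesq m T x y + sesq m T y x
     = (sesq m id_mat y y - (\<Sum>c<m. cnj (z c) * z c)) + sesq m id_mat (\<lambda>a. x a + z a) (\<lambda>a. x a + z a)"
    unfolding sesq_id_mat by (simp add: sum.distrib algebra_simps)
  also have "0 \<le> \<dots>" using defect sesq_id_mat_nonneg by (rule add_nonneg_nonneg)
  finally show "0 \<le> sesq m id_mat x x + sesq m id_mat y y + sesq m T x y + sesq m T y x" .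
qed

lemma selfadj_contraction_of_sym_block_psd:
  assumes h: "hermitian m C" and blk: "sym_block_psd m id_mat C"
  shows "selfadj_contraction m C"
  unfolding selfadj_contraction_def psd_on_iff_sesq
proof (rule conjI)
  show "\<forall>a<m. \<forall>b<m. C b a = cnj (C a b)" using h unfolding hermitian_def .
  show "\<forall>v. 0 \<le> sesq m (\<lambda>a b. (if a = b then 1 else 0) - (\<Sum>c<m. cnj (C c a) * C c b)) v v"
  proof
    fix v
    define z where "z = (\<lambda>a. \<Sum>b<m. C a b * v b)"
    define y where "y = (\<lambda>a. - z a)"
    have "sesq m C v y = - (\<Sum>a<m. cnj (z a) * z a)"
      unfolding sesq_mult_left[OF h] z_def y_def by (simp add: sum_negf)
    moreover have "sesq m C y v = - (\<Sum>a<m. cnj (z a) * z a)"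
      unfolding sesq_mult_right z_def y_def by (simp add: sum_negf)
    moreover have "sesq m id_mat y y = (\<Sum>a<m. cnj (z a) * z a)"
      unfolding sesq_id_mat y_def by simp
    ultimately have "sesq m (\<lambda>a b. (if a = b then 1 else 0) - (\<Sum>c<m. cnj (C c a) * C c b)) v v
       = sesq m id_mat v v + sesq m id_mat y y + sesq m C v y + sesq m C y v"
      unfolding sesq_one_minus_gram z_def by simp
    then show "0 \<le> sesq m (\<lambda>a b. (if a = b then 1 else 0) - (\<Sum>c<m. cnj (C c a) * C c b)) v v"
      using blk unfolding sym_block_psd_def by simp
  qed
qed

lemma hermitian_of_sym_block_psd:
  assumes blk: "sym_block_psd p X Y"
  shows "hermitian p X" and "hermitian p Y"
proof -
  have X_pos: "0 \<le> sesq p X z z" for z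
    using blk unfolding sym_block_psd_def by (metis add.right_neutral sesq_zero_left sesq_zero_right)
  then have X_real: "Im (sesq p X z z) = 0" for z by (simp add: less_eq_complex_def)
  show "hermitian p X"
  proof (rule hermitian_if_Im_sesq_symmetric)
    fix x y
    show "Im (sesq p X x y + sesq p X y x) = 0"
      using X_real[of "\<lambda>a. x a + y a"] X_real[of x] X_real[of y] unfolding sesq_add_vec by simp
  qed
  show "hermitian p Y"
  proof (rule hermitian_if_Im_sesq_symmetric)
    fix x y
    have "Im (sesq p X x x + sesq p X y y + sesq p Y x y + sesq p Y y x) = 0"
      using blk unfolding sym_block_psd_def by (simp add: less_eq_complex_def)
    then show "Im (sesq p Y x y + sesq p Y y x) = 0" using X_real[of x] X_real[of y] by simp
  qed
qed

lemma sym_block_psd_add_id_mat: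
  assumes blk: "sym_block_psd p X Y" and s: "0 \<le> s"
  shows "sym_block_psd p (\<lambda>a b. X a b + of_real s * id_mat a b) Y"
  unfolding sym_block_psd_def
proof (intro allI)
  fix x y
  have "sesq p (\<lambda>a b. X a b + of_real s * id_mat a b) x x + sesq p (\<lambda>a b. X a b + of_real s * id_mat a b) y y
      + sesq p Y x y + sesq p Y y x
    = (sesq p X x x + sesq p X y y + sesq p Y x y + sesq p Y y x)
      + of_real s * (sesq p id_mat x x + sesq p id_mat y y)"
    unfolding sesq_add_mat sesq_scale_mat by (simp add: algebra_simps)
  also have "0 \<le> \<dots>"
  proof (rule add_nonneg_nonneg)
    show "0 \<le> sesq p X x x + sesq p X y y + sesq p Y x y + sesq p Y y x"
      using blk unfolding sym_block_psd_def by blast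
    show "0 \<le> of_real s * (sesq p id_mat x x + sesq p id_mat y y)"
      using s by (intro mult_nonneg_nonneg add_nonneg_nonneg sesq_id_mat_nonneg) (simp add: less_eq_complex_def)
  qed
  finally show "0 \<le> sesq p (\<lambda>a b. X a b + of_real s * id_mat a b) x x
      + sesq p (\<lambda>a b. X a b + of_real s * id_mat a b) y y + sesq p Y x y + sesq p Y y x" .
qed

lemma selfadj_contraction_congruence:
  assumes blk: "sym_block_psd p X Y"
    and K: "\<And>a b. a < p \<Longrightarrow> b < p \<Longrightarrow> congruence p K X a b = id_mat a b"
  shows "selfadj_contraction p (congruence p K Y)"
proof (rule selfadj_contraction_of_sym_block_psd)
  show "hermitian p (congruence p K Y)"
    using hermitian_of_sym_block_psd(2)[OF blk] by (rule hermitian_congruence)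
  have "sesq p id_mat x y = sesq p X (adj_mult p K x) (adj_mult p K y)" for x y
  proof -
    have "sesq p id_mat x y = sesq p (congruence p K X) x y"
      by (rule sesq_cong) (simp_all add: K)
    then show ?thesis unfolding sesq_congruence .
  qed
  then show "sym_block_psd p id_mat (congruence p K Y)"
    using blk unfolding sym_block_psd_def sesq_congruence by simp
qed

subsection \<open>The matrix orders as positivity of tensor forms\<close>

text \<open>The quadratic form of \<open>A \<otimes> B\<close> at the vector with \<open>\<complex>\<^sup>m\<close>-components \<open>V r\<close>.\<close>

definition tensor_form :: "nat \<Rightarrow> nat \<Rightarrow> (nat \<Rightarrow> nat \<Rightarrow> complex) \<Rightarrow> (nat \<Rightarrow> nat \<Rightarrow> complex)
    \<Rightarrow> (nat \<Rightarrow> nat \<Rightarrow> complex) \<Rightarrow> complex" where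
  "tensor_form q m A B V = (\<Sum>r<q. \<Sum>s<q. A r s * sesq m B (V r) (V s))"

definition with_unit :: "(nat \<Rightarrow> nat \<Rightarrow> nat \<Rightarrow> complex) \<Rightarrow> nat \<Rightarrow> nat \<Rightarrow> nat \<Rightarrow> complex" where
  "with_unit T i = (if i = 0 then id_mat else T i)"

lemma psd_on_tensor_sum_iff:
  "psd_on ({..<q} \<times> {..<m}) (\<lambda>(r, a) (s, b). \<Sum>i\<in>I. A i r s * B i a b)
   \<longleftrightarrow> (\<forall>V. 0 \<le> (\<Sum>i\<in>I. tensor_form q m (A i) (B i) V))"
proof -
  have form: "(\<Sum>u\<in>{..<q} \<times> {..<m}. \<Sum>w\<in>{..<q} \<times> {..<m}. cnj (v u) *
      (case u of (r, a) \<Rightarrow> \<lambda>(s, b). \<Sum>i\<in>I. A i r s * B i a b) w * v w)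
    = (\<Sum>i\<in>I. tensor_form q m (A i) (B i) (\<lambda>r a. v (r, a)))" for v :: "nat \<times> nat \<Rightarrow> complex"
  proof -
    have "(\<Sum>u\<in>{..<q} \<times> {..<m}. \<Sum>w\<in>{..<q} \<times> {..<m}. cnj (v u) *
        (case u of (r, a) \<Rightarrow> \<lambda>(s, b). \<Sum>i\<in>I. A i r s * B i a b) w * v w)
      = (\<Sum>r<q. \<Sum>a<m. \<Sum>s<q. \<Sum>b<m. \<Sum>i\<in>I. A i r s * (cnj (v (r, a)) * B i a b * v (s, b)))"
      by (simp only: sum.cartesian_product') (simp add: sum_distrib_left sum_distrib_right mult_ac)
    also have "\<dots> = (\<Sum>r<q. \<Sum>s<q. \<Sum>a<m. \<Sum>b<m. \<Sum>i\<in>I. A i r s * (cnj (v (r, a)) * B i a b * v (s, b)))"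
      by (rule sum.cong[OF refl], rule sum.swap)
    also have "\<dots> = (\<Sum>i\<in>I. \<Sum>r<q. \<Sum>s<q. \<Sum>a<m. \<Sum>b<m. A i r s * (cnj (v (r, a)) * B i a b * v (s, b)))"
      by (simp only: sum.swap[where B = I])
    also have "\<dots> = (\<Sum>i\<in>I. tensor_form q m (A i) (B i) (\<lambda>r a. v (r, a)))"
      unfolding tensor_form_def sesq_def by (simp add: sum_distrib_left)
    finally show ?thesis .
  qed
  show ?thesis
  proof
    assume "psd_on ({..<q} \<times> {..<m}) (\<lambda>(r, a) (s, b). \<Sum>i\<in>I. A i r s * B i a b)"
    then have "0 \<le> (\<Sum>i\<in>I. tensor_form q m (A i) (B i) (\<lambda>r a. v (r, a)))" for v
      unfolding psd_on_def form by blast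
    from this[of "\<lambda>(r, a). V r a" for V] show "\<forall>V. 0 \<le> (\<Sum>i\<in>I. tensor_form q m (A i) (B i) V)"
      by simp
  qed (unfold psd_on_def form, blast)
qed

lemma nc_pos_iff:
  "nc_pos n q A \<longleftrightarrow> (\<forall>m T. (\<forall>i\<in>{1..n}. selfadj_contraction m (T i)) \<longrightarrow>
      (\<forall>V. 0 \<le> (\<Sum>i\<le>n. tensor_form q m (A i) (with_unit T i) V)))"
proof -
  have "A 0 r s * (if a = b then 1 else 0) + (\<Sum>i\<in>{1..n}. A i r s * T i a b)
      = (\<Sum>i\<le>n. A i r s * with_unit T i a b)" for T r s a b
  proof -
    have "{..n} = insert 0 {1..n}" by auto
    then show ?thesis by (simp add: with_unit_def id_mat_def)
  qed
  then show ?thesis unfolding nc_pos_def psd_on_tensor_sum_iff[symmetric] by simp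
qed

lemma dual_pos_iff:
  "dual_pos n p B \<longleftrightarrow> (\<forall>q A. nc_pos n q A \<longrightarrow> (\<forall>V. 0 \<le> (\<Sum>i\<le>n. tensor_form q p (A i) (B i) V)))"
  unfolding dual_pos_def psd_on_tensor_sum_iff ..

subsection \<open>The isomorphism onto W\<close>

definition W_basis :: "nat \<Rightarrow> nat \<Rightarrow> nat \<Rightarrow> nat \<Rightarrow> complex" where
  "W_basis l k i j = (if l = 0 then (if i = j then 1 else 0) else if l = k \<and> i \<noteq> j then 1 else 0)"

definition flip_mat :: "nat \<Rightarrow> nat \<Rightarrow> complex" where
  "flip_mat r s = (if r \<noteq> s then 1 else 0)"

text \<open>The element \<open>1 \<otimes> I\<^sub>2 + h\<^sub>k \<otimes> flip_mat\<close> of \<open>M\<^sub>2(NC(n))\<close>.\<close>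

definition test_elem :: "nat \<Rightarrow> nat \<Rightarrow> nat \<Rightarrow> nat \<Rightarrow> complex" where
  "test_elem k i = (if i = 0 then id_mat else if i = k then flip_mat else (\<lambda>_ _. 0))"

lemma lin_map_W_basis:
  assumes k: "k \<in> {1..n}"
  shows "lin_map n W_basis f k i j = f 0 * (if i = j then 1 else 0) + f k * (if i \<noteq> j then 1 else 0)"
proof -
  have "f l * W_basis l k i j = (if l = 0 then f 0 * (if i = j then 1 else 0) else 0)
        + (if l = k then f k * (if i \<noteq> j then 1 else 0) else 0)" for l
    using k unfolding W_basis_def by auto
  then show ?thesis
    using k unfolding lin_map_def by (simp add: sum.distrib)
qed

lemma dsum_pos_W_basis_iff:
  "dsum_pos n p (lin_map_ampl n W_basis B) \<longleftrightarrow> (\<forall>k\<in>{1..n}. sym_block_psd p (B 0) (B k))"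
proof -
  have "(\<lambda>(r, i) (s, j). lin_map_ampl n W_basis B k r s i j)
      = (\<lambda>(r, i) (s, j). B 0 r s * (if i = j then 1 else 0) + B k r s * (if i \<noteq> j then 1 else 0))"
    if "k \<in> {1..n}" for k
    using that unfolding lin_map_ampl_def by (simp add: lin_map_W_basis)
  then show ?thesis unfolding dsum_pos_def by (simp add: psd_on_block_iff)
qed

lemma tensor_sum_test_elem:
  assumes k: "k \<in> {1..n}"
  shows "(\<Sum>i\<le>n. tensor_form 2 m (test_elem k i) (F i) V)
    = sesq m (F 0) (V 0) (V 0) + sesq m (F 0) (V 1) (V 1) + sesq m (F k) (V 0) (V 1) + sesq m (F k) (V 1) (V 0)"
proof -
  have "tensor_form 2 m (test_elem k i) (F i) V
      = (if i = 0 then tensor_form 2 m id_mat (F 0) V else 0)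
        + (if i = k then tensor_form 2 m flip_mat (F k) V else 0)" for i
    using k unfolding test_elem_def by (auto simp: tensor_form_def)
  then have "(\<Sum>i\<le>n. tensor_form 2 m (test_elem k i) (F i) V)
      = tensor_form 2 m id_mat (F 0) V + tensor_form 2 m flip_mat (F k) V"
    using k by (simp add: sum.distrib)
  then show ?thesis
    unfolding tensor_form_def id_mat_def flip_mat_def by (simp add: numeral_2_eq_2)
qed

lemma nc_pos_test_elem:
  assumes k: "k \<in> {1..n}"
  shows "nc_pos n 2 (test_elem k)"
  unfolding nc_pos_iff
proof (intro allI impI)
  fix m T V assume "\<forall>i\<in>{1..n}. selfadj_contraction m (T i)"
  then have "sym_block_psd m id_mat (T k)"
    using k by (blast intro: sym_block_psd_id_of_selfadj_contraction)
  then show "0 \<le> (\<Sum>i\<le>n. tensor_form 2 m (test_elem k i) (with_unit T i) V)"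
    unfolding tensor_sum_test_elem[OF k] sym_block_psd_def using k by (simp add: with_unit_def)
qed

lemma sym_block_psd_of_dual_pos:
  assumes "dual_pos n p B" and k: "k \<in> {1..n}"
  shows "sym_block_psd p (B 0) (B k)"
  unfolding sym_block_psd_def
proof (intro allI)
  fix x y
  have "0 \<le> (\<Sum>i\<le>n. tensor_form 2 p (test_elem k i) (B i) (\<lambda>r. if r = 0 then x else y))"
    using assms nc_pos_test_elem[OF k] unfolding dual_pos_iff by blast
  then show "0 \<le> sesq p (B 0) x x + sesq p (B 0) y y + sesq p (B k) x y + sesq p (B k) y x"
    unfolding tensor_sum_test_elem[OF k] by simp
qed

lemma dual_pos_of_congruent_contractions:
  assumes K0: "\<And>a b. a < p \<Longrightarrow> b < p \<Longrightarrow> congruence p K (B 0) a b = id_mat a b"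
    and L: "\<And>a b. a < p \<Longrightarrow> b < p \<Longrightarrow> (\<Sum>c<p. L a c * K c b) = id_mat a b"
    and contr: "\<And>i. i \<in> {1..n} \<Longrightarrow> selfadj_contraction p (congruence p K (B i))"
  shows "dual_pos n p B"
  unfolding dual_pos_iff
proof (intro allI impI)
  fix q A V assume A: "nc_pos n q A"
  define C where "C = (\<lambda>i. congruence p K (B i))"
  define W where "W = (\<lambda>r::nat. adj_mult p L (V r))"
  have "\<forall>i\<in>{1..n}. selfadj_contraction p (C i)" using contr by (simp add: C_def)
  with A have nonneg: "0 \<le> (\<Sum>i\<le>n. tensor_form q p (A i) (with_unit C i) W)"
    unfolding nc_pos_iff by blast
  have "sesq p (with_unit C i) (W r) (W s) = sesq p (B i) (V r) (V s)" for i r s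
  proof -
    have "sesq p (with_unit C i) (W r) (W s) = sesq p (C i) (W r) (W s)"
      unfolding with_unit_def C_def by (cases "i = 0") (auto intro: sesq_cong simp: K0)
    also have "\<dots> = sesq p (B i) (adj_mult p K (W r)) (adj_mult p K (W s))"
      unfolding C_def by (rule sesq_congruence)
    also have "\<dots> = sesq p (B i) (V r) (V s)"
      unfolding W_def by (rule sesq_cong) (simp_all add: adj_mult_left_inverse[OF L])
    finally show ?thesis .
  qed
  then have "tensor_form q p (A i) (with_unit C i) W = tensor_form q p (A i) (B i) V" for i
    unfolding tensor_form_def by simp
  with nonneg show "0 \<le> (\<Sum>i\<le>n. tensor_form q p (A i) (B i) V)" by simp
qed

lemma nonneg_of_nonneg_perturbations:
  fixes z c :: complex
  assumes "\<And>\<epsilon>. 0 < \<epsilon> \<Longrightarrow> 0 \<le> z + of_real \<epsilon> * c"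
  shows "0 \<le> z"
proof -
  have 1: "Im z + Im c = 0" "0 \<le> Re z + Re c" using assms[of 1] by (auto simp: less_eq_complex_def)
  have "Im z + 2 * Im c = 0" using assms[of 2] by (auto simp: less_eq_complex_def)
  then have im: "Im z = 0" using 1 by linarith
  have "0 \<le> Re z"
  proof (rule ccontr)
    assume neg: "\<not> 0 \<le> Re z"
    then have rc: "0 < Re c" using 1 by linarith
    define e where "e = - Re z / (2 * Re c)"
    have e: "0 < e" unfolding e_def using neg rc by (simp add: divide_neg_pos)
    have "0 \<le> Re z + e * Re c" using assms[OF e] by (auto simp: less_eq_complex_def)
    also have "e * Re c = - Re z / 2" unfolding e_def using rc by (simp add: field_simps)
    finally show False using neg by linarith
  qed
  then show ?thesis using im by (simp add: less_eq_complex_def)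
qed

lemma dual_pos_of_perturbations:
  assumes "\<And>\<epsilon>. 0 < \<epsilon> \<Longrightarrow> dual_pos n p (B(0 := \<lambda>a b. B 0 a b + of_real \<epsilon> * id_mat a b))"
  shows "dual_pos n p B"
  unfolding dual_pos_iff
proof (intro allI impI)
  fix q A V assume A: "nc_pos n q A"
  show "0 \<le> (\<Sum>i\<le>n. tensor_form q p (A i) (B i) V)"
  proof (rule nonneg_of_nonneg_perturbations)
    fix \<epsilon> :: real assume "0 < \<epsilon>"
    have "tensor_form q p (A i) ((B(0 := \<lambda>a b. B 0 a b + of_real \<epsilon> * id_mat a b)) i) V
        = tensor_form q p (A i) (B i) V + (if i = 0 then of_real \<epsilon> * tensor_form q p (A 0) id_mat V else 0)"
      for i
      by (cases "i = 0")
        (simp_all add: tensor_form_def sesq_add_mat sesq_scale_mat sum.distrib sum_distrib_left algebra_simps)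
    then have "(\<Sum>i\<le>n. tensor_form q p (A i) ((B(0 := \<lambda>a b. B 0 a b + of_real \<epsilon> * id_mat a b)) i) V)
        = (\<Sum>i\<le>n. tensor_form q p (A i) (B i) V) + of_real \<epsilon> * tensor_form q p (A 0) id_mat V"
      by (simp add: sum.distrib)
    moreover have "0 \<le> (\<Sum>i\<le>n. tensor_form q p (A i) ((B(0 := \<lambda>a b. B 0 a b + of_real \<epsilon> * id_mat a b)) i) V)"
      using assms[OF \<open>0 < \<epsilon>\<close>] A unfolding dual_pos_iff by blast
    ultimately show "0 \<le> (\<Sum>i\<le>n. tensor_form q p (A i) (B i) V) + of_real \<epsilon> * tensor_form q p (A 0) id_mat V"
      by simp
  qed
qed

lemma dual_pos_of_sym_block_psd:
  assumes n: "1 \<le> n" and blk: "\<And>k. k \<in> {1..n} \<Longrightarrow> sym_block_psd p (B 0) (B k)"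
  shows "dual_pos n p B"
proof (rule dual_pos_of_perturbations)
  fix \<epsilon> :: real assume \<epsilon>: "0 < \<epsilon>"
  define X where "X = (\<lambda>a b. B 0 a b + of_real \<epsilon> * id_mat a b)"
  have "hermitian p (B 0)" using blk[of 1] n by (auto dest: hermitian_of_sym_block_psd)
  then have "hermitian p X" unfolding X_def by (rule hermitian_add_id_mat)
  moreover have "\<epsilon> * (\<Sum>a<p. (cmod (x a))\<^sup>2) \<le> Re (sesq p X x x)" for x
  proof -
    have "0 \<le> sesq p (B 0) x x"
      using blk[of 1] n unfolding sym_block_psd_def
      by (metis add.right_neutral sesq_zero_left sesq_zero_right atLeastAtMost_iff order_refl)
    then show ?thesis
      unfolding X_def sesq_add_mat sesq_scale_mat Re_sesq_id_mat[symmetric]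
      by (simp add: less_eq_complex_def)
  qed
  ultimately obtain K L where K: "\<forall>a<p. \<forall>b<p. congruence p K X a b = id_mat a b"
      and L: "\<forall>a<p. \<forall>b<p. (\<Sum>c<p. L a c * K c b) = id_mat a b"
    using coercive_congruent_id[OF _ \<epsilon>] by blast
  have "sym_block_psd p X (B i)" if "i \<in> {1..n}" for i
    unfolding X_def using sym_block_psd_add_id_mat[OF blk[OF that]] \<epsilon> by simp
  then have "selfadj_contraction p (congruence p K (B i))" if "i \<in> {1..n}" for i
    using K that by (blast intro: selfadj_contraction_congruence)
  then have "dual_pos n p (B(0 := X))"
    using K L by (intro dual_pos_of_congruent_contractions[of p K _ L]) auto
  then show "dual_pos n p (B(0 := \<lambda>a b. B 0 a b + of_real \<epsilon> * id_mat a b))"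
    unfolding X_def .
qed

lemma dual_pos_iff_dsum_pos_W_basis:
  assumes "1 \<le> n"
  shows "dual_pos n p B \<longleftrightarrow> dsum_pos n p (lin_map_ampl n W_basis B)"
  unfolding dsum_pos_W_basis_iff
  using sym_block_psd_of_dual_pos dual_pos_of_sym_block_psd[OF assms] by blast

lemma in_W_lin_map_W_basis: "in_W n (lin_map n W_basis f)"
  unfolding in_W_def by (simp add: lin_map_W_basis)

lemma lin_map_W_basis_onto_W:
  assumes n: "1 \<le> n" and w: "in_W n w"
  shows "\<exists>f. \<forall>k\<in>{1..n}. \<forall>i<2. \<forall>j<2. lin_map n W_basis f k i j = w k i j"
proof (intro exI ballI allI impI)
  fix k i j assume k: "k \<in> {1..n}" and ij: "i < (2::nat)" "j < (2::nat)"
  have "1 \<in> {1..n}" "(0::nat) < 2" using n by simp_all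
  then have "w k i i = w 1 0 0" using w k ij unfolding in_W_def by blast
  moreover have "w k 0 1 = w k 1 0" using w k unfolding in_W_def by blast
  ultimately show "lin_map n W_basis (\<lambda>l. if l = 0 then w 1 0 0 else w l 0 1) k i j = w k i j"
    unfolding lin_map_W_basis[OF k] using ij k by (cases "i = j") (auto simp: less_2_cases_iff)
qed

lemma lin_map_W_basis_injective:
  assumes n: "1 \<le> n" and zero: "\<forall>k\<in>{1..n}. \<forall>i<2. \<forall>j<2. lin_map n W_basis f k i j = 0"
    and l: "l \<le> n"
  shows "f l = 0"
proof (cases "l = 0")
  case True
  then show ?thesis using zero n lin_map_W_basis[of 1 n f 0 0] by simp
next
  case False
  then have "l \<in> {1..n}" using l by simp
  then show ?thesis using zero lin_map_W_basis[of l n f 0 1] by simp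
qed

theorem proposition5p13:
  fixes n :: nat
  assumes "n \<ge> 2"
  shows "\<exists>c. compl_order_iso_dual_W n c"
proof
  have n: "1 \<le> n" using assms by simp
  show "compl_order_iso_dual_W n W_basis"
    unfolding compl_order_iso_dual_W_def
    using in_W_lin_map_W_basis lin_map_W_basis_onto_W[OF n] lin_map_W_basis_injective[OF n]
      dual_pos_iff_dsum_pos_W_basis[OF n]
    by blast
qed

end
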